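(* Let $G$ be a connected graph with $|V(G)| \ge 3$. Then $\mathrm{Dist}'(G) \le \det'(G) + 1$.
   Context: The distinguishing index $\mathrm{Dist}'(G)$ is the minimum number of colors in a coloring of the edges of $G$ (not necessarily proper) such that the only automorphism of $G$ preserving every edge color is the identity. For a graph $G$ with at most one isolated vertex and no component isomorphic to $K_2$, an edge subset $T$ is an edge determining set if the only automorphism $\phi$ of $G$ satisfying $\{\phi(u),\phi(v)\}=\{u,v\}$ for all $\{u,v\}\in T$ is the identity; the determining index $\det'(G)$ is the minimum size of an edge determining set. *)

theory Defs
  imports Main
begin

definition graph :: "'a set \<Rightarrow> 'a set set \<Rightarrow> bool" where
  "graph V E \<longleftrightarrow> finite V \<and> (\<forall>e\<in>E. \<exists>u v. u \<in> V \<and> v \<in> V \<and> u \<noteq> v \<and> e = {u, v})"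

definition connected_graph :: "'a set \<Rightarrow> 'a set set \<Rightarrow> bool" where
  "connected_graph V E \<longleftrightarrow>
     (\<forall>u\<in>V. \<forall>v\<in>V. \<exists>p. p \<noteq> [] \<and> hd p = u \<and> last p = v \<and> set p \<subseteq> V \<and>
        (\<forall>i. Suc i < length p \<longrightarrow> {p ! i, p ! Suc i} \<in> E))"

text \<open>Automorphisms, as permutations of V (values outside V are irrelevant).\<close>

definition automorphism :: "'a set \<Rightarrow> 'a set set \<Rightarrow> ('a \<Rightarrow> 'a) \<Rightarrow> bool" where
  "automorphism V E \<phi> \<longleftrightarrow> bij_betw \<phi> V V \<and>
     (\<forall>u\<in>V. \<forall>v\<in>V. {u, v} \<in> E \<longleftrightarrow> {\<phi> u, \<phi> v} \<in> E)"

definition distinguishing_edge_colouring ::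
  "'a set \<Rightarrow> 'a set set \<Rightarrow> ('a set \<Rightarrow> nat) \<Rightarrow> bool" where
  "distinguishing_edge_colouring V E c \<longleftrightarrow>
     (\<forall>\<phi>. automorphism V E \<phi> \<and> (\<forall>e\<in>E. c (\<phi> ` e) = c e) \<longrightarrow> (\<forall>v\<in>V. \<phi> v = v))"

definition distinguishing_index :: "'a set \<Rightarrow> 'a set set \<Rightarrow> nat" where
  "distinguishing_index V E = (LEAST k. \<exists>c. (\<forall>e\<in>E. c e < k) \<and> distinguishing_edge_colouring V E c)"

definition edge_determining_set :: "'a set \<Rightarrow> 'a set set \<Rightarrow> 'a set set \<Rightarrow> bool" where
  "edge_determining_set V E T \<longleftrightarrow> T \<subseteq> E \<and>
     (\<forall>\<phi>. automorphism V E \<phi> \<and> (\<forall>e\<in>T. \<phi> ` e = e) \<longrightarrow> (\<forall>v\<in>V. \<phi> v = v))"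

definition determining_index :: "'a set \<Rightarrow> 'a set set \<Rightarrow> nat" where
  "determining_index V E = (LEAST k. \<exists>T. edge_determining_set V E T \<and> card T = k)"

end

theory Submission
  imports Defs
begin

text \<open>If an automorphism fixes every edge setwise and moves a vertex v, then v has the
  single neighbour \<phi> v and \<phi> swaps v and \<phi> v, so the walks from v never leave {v, \<phi> v};
  connectedness and three vertices rule this out, hence the full edge set is determining
  and the determining index is attained. Given a minimum determining set T, colour its
  edges with the distinct colours 1, ..., |T| and all other edges with 0: a
  colour-preserving automorphism must fix each edge of T, since its colour class is a
  singleton, and is therefore the identity.\<close>

lemma walk_closed_set:
  assumes "p \<noteq> []" "hd p \<in> S"
    and "\<And>i. Suc i < length p \<Longrightarrow> {p ! i, p ! Suc i} \<in> E"
    and "\<And>x y. x \<in> S \<Longrightarrow> {x, y} \<in> E \<Longrightarrow> y \<in> S"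
  shows "set p \<subseteq> S"
proof -
  have "p ! i \<in> S" if "i < length p" for i
    using that
  proof (induction i)
    case 0
    then show ?case using assms(1,2) by (simp add: hd_conv_nth)
  next
    case (Suc i)
    then show ?case using assms(3)[of i] assms(4) by auto
  qed
  then show ?thesis by (auto simp: in_set_conv_nth)
qed

lemma fixed_edge_neighbour:
  assumes "\<phi> ` {y, z} = {y, z}" "\<phi> y \<noteq> y"
  shows "z = \<phi> y"
  using assms by auto

lemma edge_fixing_map_moved_pair_closed:
  assumes inj: "inj_on \<phi> V" and fixed: "\<And>e. e \<in> E \<Longrightarrow> \<phi> ` e = e"
    and v: "v \<in> V" "\<phi> v \<in> V" "\<phi> v \<noteq> v" and edge: "{v, u} \<in> E"
    and "{x, y} \<in> E" "x \<in> {v, \<phi> v}"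
  shows "y \<in> {v, \<phi> v}"
proof -
  have nbr: "\<And>y z. {y, z} \<in> E \<Longrightarrow> \<phi> y \<noteq> y \<Longrightarrow> z = \<phi> y"
    by (rule fixed_edge_neighbour[OF fixed])
  have "{\<phi> v, v} \<in> E"
    using nbr[OF edge v(3)] edge by (simp add: insert_commute)
  moreover have moved: "\<phi> (\<phi> v) \<noteq> \<phi> v"
    using inj v by (auto dest: inj_onD)
  ultimately have "\<phi> (\<phi> v) = v"
    using nbr by metis
  with assms(7,8) show ?thesis
    using nbr v(3) moved by blast
qed

lemma edge_determining_set_all_edges:
  assumes "connected_graph V E" and "card V \<ge> 3"
  shows "edge_determining_set V E E"
  unfolding edge_determining_set_def
proof (intro conjI allI impI ballI subset_refl)
  fix \<phi> v
  assume "automorphism V E \<phi> \<and> (\<forall>e\<in>E. \<phi> ` e = e)" and v: "v \<in> V"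
  then have bij: "bij_betw \<phi> V V" and fixed: "\<And>e. e \<in> E \<Longrightarrow> \<phi> ` e = e"
    unfolding automorphism_def by auto
  show "\<phi> v = v"
  proof (rule ccontr)
    assume moved: "\<phi> v \<noteq> v"
    have "\<phi> v \<in> V" using bij v by (blast dest: bij_betwE)
    have "\<not> V \<subseteq> {v, \<phi> v}"
    proof
      assume "V \<subseteq> {v, \<phi> v}"
      then have "card V \<le> card {v, \<phi> v}" by (intro card_mono) auto
      also have "\<dots> \<le> 2" by (simp add: card_insert_le_m1)
      finally show False using assms(2) by simp
    qed
    then obtain x where x: "x \<in> V" "x \<notin> {v, \<phi> v}" by blast
    obtain p where p: "p \<noteq> []" "hd p = v" "last p = x"
      and walk: "\<And>i. Suc i < length p \<Longrightarrow> {p ! i, p ! Suc i} \<in> E"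
      using assms(1) v x(1) unfolding connected_graph_def by blast
    have "Suc 0 < length p"
    proof (rule ccontr)
      assume "\<not> Suc 0 < length p"
      then have "p = [v]" using p(1,2) by (cases p) auto
      then show False using p(3) x(2) by simp
    qed
    then have edge: "{v, p ! 1} \<in> E"
      using walk[of 0] p(1,2) by (simp add: hd_conv_nth)
    have "set p \<subseteq> {v, \<phi> v}"
      using walk_closed_set[OF p(1) _ walk] p(2) edge_fixing_map_moved_pair_closed
        [OF bij_betw_imp_inj_on[OF bij] fixed v \<open>\<phi> v \<in> V\<close> moved edge]
      by blast
    moreover have "x \<in> set p" using p(1,3) last_in_set by blast
    ultimately show False using x(2) by blast
  qed
qed

lemma determining_index_attained:
  assumes "edge_determining_set V E T\<^sub>0"
  obtains T where "edge_determining_set V E T" "card T = determining_index V E"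
  using LeastI_ex[of "\<lambda>k. \<exists>T. edge_determining_set V E T \<and> card T = k"] assms
  unfolding determining_index_def by blast

lemma automorphism_image_edge:
  assumes "graph V E" "automorphism V E \<phi>" "e \<in> E"
  shows "\<phi> ` e \<in> E"
  using assms unfolding graph_def automorphism_def by fastforce

lemma distinguishing_edge_colouring_of_determining_set:
  assumes "graph V E" and "edge_determining_set V E T"
    and singleton_class: "\<And>e e'. e \<in> T \<Longrightarrow> e' \<in> E \<Longrightarrow> c e' = c e \<Longrightarrow> e' = e"
  shows "distinguishing_edge_colouring V E c"
  unfolding distinguishing_edge_colouring_def
proof (intro allI impI)
  fix \<phi> assume \<phi>: "automorphism V E \<phi> \<and> (\<forall>e\<in>E. c (\<phi> ` e) = c e)"
  have "T \<subseteq> E" using assms(2) unfolding edge_determining_set_def by simp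
  then have "\<forall>e\<in>T. \<phi> ` e = e"
    using \<phi> singleton_class automorphism_image_edge[OF assms(1)] by blast
  then show "\<forall>v\<in>V. \<phi> v = v"
    using \<phi> assms(2) unfolding edge_determining_set_def by blast
qed

lemma distinguishing_index_le_determining_set:
  assumes "graph V E" and "edge_determining_set V E T"
  shows "distinguishing_index V E \<le> card T + 1"
proof -
  have "finite E"
    using assms(1) unfolding graph_def by (intro finite_subset[of E "Pow V"]) auto
  moreover have T: "T \<subseteq> E" using assms(2) unfolding edge_determining_set_def by simp
  ultimately obtain h where h: "bij_betw h T {0..<card T}"
    using ex_bij_betw_finite_nat finite_subset by blast
  define c where "c e = (if e \<in> T then Suc (h e) else 0)" for e
  have "\<forall>e\<in>E. c e < card T + 1"
    using h unfolding c_def bij_betw_def by auto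
  moreover have "distinguishing_edge_colouring V E c"
  proof (rule distinguishing_edge_colouring_of_determining_set[OF assms])
    show "e' = e" if "e \<in> T" "e' \<in> E" "c e' = c e" for e e'
      using that h unfolding c_def bij_betw_def by (auto split: if_splits dest: inj_onD)
  qed
  ultimately show ?thesis
    unfolding distinguishing_index_def by (intro Least_le) blast
qed

theorem theorem3:
  fixes V :: "'a set" and E :: "'a set set"
  assumes "graph V E" and "connected_graph V E" and "card V \<ge> 3"
  shows "distinguishing_index V E \<le> determining_index V E + 1"
proof -
  obtain T where T: "edge_determining_set V E T" "card T = determining_index V E"
    using determining_index_attained edge_determining_set_all_edges[OF assms(2,3)] by blast
  show ?thesis
    using distinguishing_index_le_determining_set[OF assms(1) T(1)] T(2) by simp
qed

end
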